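(* Let $G$ be a finite group, let $R$ be a Cayley subset of $G$, and suppose $\Gamma:=\mathrm{Cay}(G,R)$ is a GRR. Then either $|\Gamma[R]_I|\le 1$ or $|\Gamma^c[R^c]_I|\le 1$. Moreover, when $|G|>2$, either $G=\langle R\setminus\Gamma[R]_I\rangle$ and $|\Gamma[R]_I|\le 1$, or $G=\langle R^c\setminus\Gamma^c[R^c]_I\rangle$ and $|\Gamma^c[R^c]_I|\le 1$.
   Context: A Cayley subset of $G$ is a subset $R$ with $R=R^{-1}$ and $1\notin R$. $\mathrm{Cay}(G,R)$ is the graph with vertex set $G$ and edges $\{g,rg\}$ for $g\in G$, $r\in R$. It is a GRR if its automorphism group equals the group of right multiplications by elements of $G$ (equivalently, is isomorphic to $G$). $R^c:=G\setminus(\{1\}\cup R)$ and $\Gamma^c=\mathrm{Cay}(G,R^c)$ is the complement of $\Gamma$. For a graph $\Sigma$ and a vertex subset $X$, $\Sigma[X]_I$ denotes the set of isolated vertices of the subgraph of $\Sigma$ induced on $X$, i.e. the $v\in X$ with no neighbour in $X$. *)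

theory Defs
  imports "HOL-Algebra.Algebra"
begin

definition cayley_subset :: "('a, 'b) monoid_scheme \<Rightarrow> 'a set \<Rightarrow> bool" where
  "cayley_subset G R \<longleftrightarrow> R \<subseteq> carrier G \<and> (\<forall>r\<in>R. inv\<^bsub>G\<^esub> r \<in> R) \<and> \<one>\<^bsub>G\<^esub> \<notin> R"

definition cay_adj :: "('a, 'b) monoid_scheme \<Rightarrow> 'a set \<Rightarrow> 'a \<Rightarrow> 'a \<Rightarrow> bool" where
  "cay_adj G R g h \<longleftrightarrow> g \<in> carrier G \<and> h \<in> carrier G \<and>
     (\<exists>r\<in>R. h = r \<otimes>\<^bsub>G\<^esub> g \<or> g = r \<otimes>\<^bsub>G\<^esub> h)"

definition cay_aut :: "('a, 'b) monoid_scheme \<Rightarrow> 'a set \<Rightarrow> ('a \<Rightarrow> 'a) set" where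
  "cay_aut G R = {\<sigma> \<in> extensional (carrier G). bij_betw \<sigma> (carrier G) (carrier G) \<and>
      (\<forall>g\<in>carrier G. \<forall>h\<in>carrier G. cay_adj G R (\<sigma> g) (\<sigma> h) \<longleftrightarrow> cay_adj G R g h)}"

definition is_GRR :: "('a, 'b) monoid_scheme \<Rightarrow> 'a set \<Rightarrow> bool" where
  "is_GRR G R \<longleftrightarrow> cay_aut G R = {(\<lambda>x\<in>carrier G. x \<otimes>\<^bsub>G\<^esub> a) | a. a \<in> carrier G}"

definition cay_compl :: "('a, 'b) monoid_scheme \<Rightarrow> 'a set \<Rightarrow> 'a set" where
  "cay_compl G R = carrier G - ({\<one>\<^bsub>G\<^esub>} \<union> R)"

text \<open>Cay(G,R)[X]_I: isolated vertices of the subgraph induced on X.\<close>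
definition cay_isolated :: "('a, 'b) monoid_scheme \<Rightarrow> 'a set \<Rightarrow> 'a set \<Rightarrow> 'a set" where
  "cay_isolated G R S = {v. v \<in> S \<and> (\<forall>w. w \<in> S \<longrightarrow> \<not> cay_adj G R v w)}"

end

(*
  Suppose x \<in> R is isolated in \<Gamma>[R] and y \<in> R^c is isolated in \<Gamma>^c[R^c]. The neighbourhoods
  of x and y both have |R| elements, N(x) avoids R and contains 1, and N(y) contains R^c - {y};
  hence they differ (apart from x and y) only in 1 and one further vertex q. If x and y are not
  adjacent, comparing N(y) with its right translate N(y x) shows y x = q and that 1 and q also
  have the same neighbours outside {1, q, x, y}; if they are adjacent, the same holds in the
  complement with x and y exchanged. So the double transposition (x y)(1 q) is an automorphism,
  and in a GRR it must be the right translation by q. This forces G = {1, q, x, y}, where x, q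
  or q, y are twins, and the transposition of twins fixes the vertex 1: a contradiction.

  For the second part, a GRR on more than two vertices is connected: otherwise right
  multiplication by some r \<in> R on the subgroup generated by R alone (or, if R is empty, a
  transposition of two non-identity vertices) is an automorphism with a fixed point that is not
  the identity. As one of the two isolated sets is empty, this gives the generation statement.
*)
theory Submission
  imports Defs
begin

lemma obtain_distinct_of_card_ge_2:
  assumes "2 \<le> card A"
  obtains a b where "a \<in> A" "b \<in> A" "a \<noteq> b"
proof -
  obtain a B where "A = insert a B" "a \<notin> B" "1 \<le> card B"
    using assms card_le_Suc_iff[of 1 A] by auto
  then show thesis
    using that by (metis card.empty insertCI not_one_le_zero ex_in_conv)
qed

lemma cayley_subset_carrier: "cayley_subset G S \<Longrightarrow> r \<in> S \<Longrightarrow> r \<in> carrier G"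
  by (auto simp: cayley_subset_def)

lemma cayley_subset_inv: "cayley_subset G S \<Longrightarrow> r \<in> S \<Longrightarrow> inv\<^bsub>G\<^esub> r \<in> S"
  by (simp add: cayley_subset_def)

lemma cayley_subset_one: "cayley_subset G S \<Longrightarrow> \<one>\<^bsub>G\<^esub> \<notin> S"
  by (simp add: cayley_subset_def)

lemma cay_adj_sym: "cay_adj G S u v \<longleftrightarrow> cay_adj G S v u"
  unfolding cay_adj_def by blast

lemma mem_cay_compl:
  fixes G :: "('a, 'b) monoid_scheme"
  shows "v \<in> cay_compl G R \<longleftrightarrow> v \<in> carrier G \<and> v \<noteq> \<one>\<^bsub>G\<^esub> \<and> v \<notin> R"
  unfolding cay_compl_def by auto

lemma mem_cay_isolated: "v \<in> cay_isolated G S V \<longleftrightarrow> v \<in> V \<and> (\<forall>w\<in>V. \<not> cay_adj G S v w)"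
  unfolding cay_isolated_def by auto

definition same_nbrs_outside :: "('a, 'b) monoid_scheme \<Rightarrow> 'a set \<Rightarrow> 'a set \<Rightarrow> 'a \<Rightarrow> 'a \<Rightarrow> bool" where
  "same_nbrs_outside G S V a b \<longleftrightarrow> (\<forall>z\<in>carrier G - V. cay_adj G S z a \<longleftrightarrow> cay_adj G S z b)"

lemma same_nbrs_outside_commute: "same_nbrs_outside G S V a b \<longleftrightarrow> same_nbrs_outside G S V b a"
  unfolding same_nbrs_outside_def by blast

(* The permutation (a b)(c d); for c = d it is the transposition (a b). *)
definition swap_pairs :: "'a \<Rightarrow> 'a \<Rightarrow> 'a \<Rightarrow> 'a \<Rightarrow> 'a \<Rightarrow> 'a" where
  "swap_pairs a b c d v =
     (if v = a then b else if v = b then a else if v = c then d else if v = d then c else v)"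

context group
begin

lemma cay_adj_iff:
  assumes "cayley_subset G S"
  shows "cay_adj G S u v \<longleftrightarrow> u \<in> carrier G \<and> v \<in> carrier G \<and> v \<otimes> inv u \<in> S"
proof
  assume adj: "cay_adj G S u v"
  then obtain r where r: "r \<in> S" and "v = r \<otimes> u \<or> u = r \<otimes> v"
    and u: "u \<in> carrier G" and v: "v \<in> carrier G"
    by (auto simp: cay_adj_def)
  with cayley_subset_carrier[OF assms r] have "v \<otimes> inv u = r \<or> v \<otimes> inv u = inv r"
    by (auto simp: inv_solve_right' simp flip: m_assoc)
  with r u v cayley_subset_inv[OF assms r] show "u \<in> carrier G \<and> v \<in> carrier G \<and> v \<otimes> inv u \<in> S"
    by auto
next
  assume "u \<in> carrier G \<and> v \<in> carrier G \<and> v \<otimes> inv u \<in> S"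
  then show "cay_adj G S u v"
    unfolding cay_adj_def by (intro conjI bexI[of _ "v \<otimes> inv u"] disjI1) (auto simp: m_assoc)
qed

lemma cay_adj_irrefl: "cayley_subset G S \<Longrightarrow> \<not> cay_adj G S u u"
  by (simp add: cay_adj_iff cayley_subset_one)

lemma cay_adj_one: "cayley_subset G S \<Longrightarrow> cay_adj G S v \<one> \<longleftrightarrow> v \<in> S"
  by (auto simp: cay_adj_iff cayley_subset_carrier dest: cayley_subset_inv)

lemma cay_adj_mult_right:
  assumes "cayley_subset G S" "u \<in> carrier G" "v \<in> carrier G" "g \<in> carrier G"
  shows "cay_adj G S (u \<otimes> g) (v \<otimes> g) \<longleftrightarrow> cay_adj G S u v"
proof -
  have "(v \<otimes> g) \<otimes> inv (u \<otimes> g) = v \<otimes> inv u"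
    using assms by (simp add: inv_mult_group m_assoc flip: m_assoc[of g])
  then show ?thesis using assms by (simp add: cay_adj_iff[OF assms(1)])
qed

lemma cayley_subset_compl:
  assumes "cayley_subset G R"
  shows "cayley_subset G (cay_compl G R)"
proof -
  have "inv r \<in> cay_compl G R" if "r \<in> cay_compl G R" for r
    using that cayley_subset_inv[OF assms, of "inv r"]
    by (auto simp: mem_cay_compl)
  then show ?thesis
    by (auto simp: cayley_subset_def mem_cay_compl)
qed

lemma cay_compl_cay_compl: "cayley_subset G R \<Longrightarrow> cay_compl G (cay_compl G R) = R"
  unfolding cay_compl_def cayley_subset_def by auto

lemma cay_adj_compl:
  assumes "cayley_subset G R" "u \<in> carrier G" "v \<in> carrier G" "u \<noteq> v"
  shows "cay_adj G (cay_compl G R) u v \<longleftrightarrow> \<not> cay_adj G R u v"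
proof -
  have "v \<otimes> inv u \<noteq> \<one>"
    using assms(2-4) by (simp add: inv_solve_right')
  then show ?thesis
    using assms by (simp add: cay_adj_iff cayley_subset_compl mem_cay_compl)
qed

lemma cay_aut_compl:
  assumes "cayley_subset G R"
  shows "cay_aut G (cay_compl G R) = cay_aut G R"
proof -
  have "(cay_adj G (cay_compl G R) (s u) (s v) \<longleftrightarrow> cay_adj G (cay_compl G R) u v)
    \<longleftrightarrow> (cay_adj G R (s u) (s v) \<longleftrightarrow> cay_adj G R u v)"
    if "bij_betw s (carrier G) (carrier G)" "u \<in> carrier G" "v \<in> carrier G" for s u v
  proof (cases "u = v")
    case False
    with that have "s u \<noteq> s v" "s u \<in> carrier G" "s v \<in> carrier G"
      by (auto simp: bij_betw_def inj_on_eq_iff)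
    with False that show ?thesis
      by (simp add: cay_adj_compl[OF assms])
  qed (simp add: cay_adj_irrefl assms cayley_subset_compl)
  then show ?thesis
    unfolding cay_aut_def by blast
qed

lemma is_GRR_compl: "cayley_subset G R \<Longrightarrow> is_GRR G R \<Longrightarrow> is_GRR G (cay_compl G R)"
  by (simp add: is_GRR_def cay_aut_compl)

lemma same_nbrs_outside_compl:
  assumes "cayley_subset G R" "a \<in> V" "b \<in> V" "a \<in> carrier G" "b \<in> carrier G"
  shows "same_nbrs_outside G (cay_compl G R) V a b \<longleftrightarrow> same_nbrs_outside G R V a b"
  unfolding same_nbrs_outside_def
proof (intro ball_cong refl)
  fix z assume "z \<in> carrier G - V"
  with assms have "z \<in> carrier G" "z \<noteq> a" "z \<noteq> b"
    by auto
  with assms show "(cay_adj G (cay_compl G R) z a \<longleftrightarrow> cay_adj G (cay_compl G R) z b)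
      \<longleftrightarrow> (cay_adj G R z a \<longleftrightarrow> cay_adj G R z b)"
    by (simp add: cay_adj_compl)
qed

lemma GRR_aut_fixpoint:
  assumes "is_GRR G R" "s \<in> cay_aut G R" "w \<in> carrier G" "s w = w" "v \<in> carrier G"
  shows "s v = v"
proof -
  obtain a where "a \<in> carrier G" and "s = (\<lambda>x\<in>carrier G. x \<otimes> a)"
    using assms(1,2) unfolding is_GRR_def by auto
  moreover from this assms(3,4) have "w \<otimes> a = w \<otimes> \<one>"
    by simp
  ultimately show ?thesis
    using assms(3,5) by simp
qed

lemma GRR_aut_mult_right:
  assumes "is_GRR G R" "s \<in> cay_aut G R" "v \<in> carrier G"
  shows "s v = v \<otimes> s \<one>"
proof -
  obtain a where "a \<in> carrier G" and "s = (\<lambda>x\<in>carrier G. x \<otimes> a)"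
    using assms(1,2) unfolding is_GRR_def by auto
  with assms(3) show ?thesis by simp
qed

lemma cay_aut_swap_pairs:
  assumes cayley: "cayley_subset G R"
    and carrier: "a \<in> carrier G" "b \<in> carrier G" "c \<in> carrier G" "d \<in> carrier G"
    and distinct: "a \<noteq> b" "a \<noteq> c" "a \<noteq> d" "b \<noteq> c" "b \<noteq> d"
    and same_ab: "same_nbrs_outside G R {a, b, c, d} a b"
    and same_cd: "same_nbrs_outside G R {a, b, c, d} c d"
    and cross: "cay_adj G R a c \<longleftrightarrow> cay_adj G R b d" "cay_adj G R a d \<longleftrightarrow> cay_adj G R b c"
  shows "(\<lambda>v\<in>carrier G. swap_pairs a b c d v) \<in> cay_aut G R"
proof -
  let ?t = "swap_pairs a b c d"
  have "?t v \<in> carrier G" if "v \<in> carrier G" for v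
    using that carrier by (simp add: swap_pairs_def)
  moreover have "?t (?t v) = v" for v
    using distinct by (auto simp: swap_pairs_def)
  ultimately have "bij_betw ?t (carrier G) (carrier G)"
    by (intro bij_betw_byWitness[where f'="?t"]) auto
  then have bij: "bij_betw (\<lambda>v\<in>carrier G. ?t v) (carrier G) (carrier G)"
    by (rule bij_betw_cong[THEN iffD1, rotated]) auto
  have outside: "cay_adj G R z a \<longleftrightarrow> cay_adj G R z b" "cay_adj G R z c \<longleftrightarrow> cay_adj G R z d"
    if "z \<in> carrier G" "z \<notin> {a, b, c, d}" for z
    using same_ab same_cd that unfolding same_nbrs_outside_def by blast+
  have fixed: "?t z = z" if "z \<notin> {a, b, c, d}" for z
    using that by (simp add: swap_pairs_def)
  have from_outside: "cay_adj G R z (?t v) \<longleftrightarrow> cay_adj G R z v"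
    if "z \<in> carrier G" "z \<notin> {a, b, c, d}" for z v
    using outside[OF that] distinct fixed[of v] by (auto simp: swap_pairs_def)
  have inside: "cay_adj G R (?t u) (?t v) \<longleftrightarrow> cay_adj G R u v"
    if "u \<in> {a, b, c, d}" "v \<in> {a, b, c, d}" for u v
  proof -
    have "cay_adj G R c a \<longleftrightarrow> cay_adj G R d b" "cay_adj G R d a \<longleftrightarrow> cay_adj G R c b"
      "cay_adj G R b a \<longleftrightarrow> cay_adj G R a b" "cay_adj G R d c \<longleftrightarrow> cay_adj G R c d"
      using cross cay_adj_sym[of G R] by metis+
    with that cross distinct show ?thesis
      by (elim insertE emptyE; simp add: swap_pairs_def cay_adj_irrefl[OF cayley])
  qed
  have "cay_adj G R (?t u) (?t v) \<longleftrightarrow> cay_adj G R u v"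
    if "u \<in> carrier G" "v \<in> carrier G" for u v
  proof (cases "u \<in> {a, b, c, d}")
    case True
    show ?thesis
    proof (cases "v \<in> {a, b, c, d}")
      case False
      with from_outside[OF that(2) False, of u] fixed[OF False] show ?thesis
        by (simp add: cay_adj_sym[of G R _ v])
    qed (use True inside in blast)
  qed (use from_outside[OF that(1)] fixed in simp)
  with bij show ?thesis
    unfolding cay_aut_def by auto
qed

lemma GRR_twins_eq:
  assumes cayley: "cayley_subset G R" and GRR: "is_GRR G R"
    and carrier: "u \<in> carrier G" "v \<in> carrier G" "w \<in> carrier G" and w: "w \<noteq> u" "w \<noteq> v"
    and twins: "same_nbrs_outside G R {u, v} u v"
  shows "u = v"
proof (rule ccontr)
  assume "u \<noteq> v"
  have "same_nbrs_outside G R {u, v, w, w} u v" "same_nbrs_outside G R {u, v, w, w} w w"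
    using twins by (auto simp: same_nbrs_outside_def)
  moreover have "cay_adj G R u w \<longleftrightarrow> cay_adj G R v w"
    using twins carrier w by (simp add: same_nbrs_outside_def cay_adj_sym[of G R _ w])
  ultimately have "(\<lambda>x\<in>carrier G. swap_pairs u v w w x) \<in> cay_aut G R"
    using \<open>u \<noteq> v\<close> w by (intro cay_aut_swap_pairs[OF cayley carrier carrier(3)]) auto
  from GRR_aut_fixpoint[OF GRR this carrier(3) _ carrier(1)] \<open>u \<noteq> v\<close> w carrier
  show False
    by (simp add: swap_pairs_def)
qed

lemma cay_adj_subgroup_closed:
  assumes "cayley_subset G R" "subgroup H G" "R \<subseteq> H" "cay_adj G R u v"
  shows "u \<in> H \<longleftrightarrow> v \<in> H"
proof -
  from assms(1,4) have u: "u \<in> carrier G" and v: "v \<in> carrier G" and "v \<otimes> inv u \<in> H"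
    using assms(3) by (auto simp: cay_adj_iff)
  moreover have "v = (v \<otimes> inv u) \<otimes> u" "u = inv (v \<otimes> inv u) \<otimes> v"
    using u v by (simp_all add: m_assoc inv_mult_group)
  ultimately show ?thesis
    using assms(2) by (metis subgroup.m_closed subgroup.m_inv_closed)
qed

lemma cay_aut_mult_right_on_subgroup:
  assumes cayley: "cayley_subset G R" and H: "subgroup H G" "R \<subseteq> H" and k: "k \<in> H"
  shows "(\<lambda>v\<in>carrier G. if v \<in> H then v \<otimes> k else v) \<in> cay_aut G R"
proof -
  let ?s = "\<lambda>v. if v \<in> H then v \<otimes> k else v"
  have kc: "k \<in> carrier G" "inv k \<in> H"
    using H(1) k by (auto simp: subgroup.mem_carrier subgroup.m_inv_closed)
  have "bij_betw ?s (carrier G) (carrier G)"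
    by (rule bij_betw_byWitness[where f'="\<lambda>v. if v \<in> H then v \<otimes> inv k else v"])
      (use H(1) k kc in \<open>auto simp: m_assoc subgroup.m_closed subgroup.mem_carrier\<close>)
  then have bij: "bij_betw (\<lambda>v\<in>carrier G. ?s v) (carrier G) (carrier G)"
    by (rule bij_betw_cong[THEN iffD1, rotated]) auto
  have "cay_adj G R (?s u) (?s v) \<longleftrightarrow> cay_adj G R u v"
    if "u \<in> carrier G" "v \<in> carrier G" for u v
  proof (cases "u \<in> H \<longleftrightarrow> v \<in> H")
    case True
    then show ?thesis
      using that kc cay_adj_mult_right[OF cayley that kc(1)] by auto
  next
    case False
    have "w \<otimes> k \<in> H \<longleftrightarrow> w \<in> H" if "w \<in> carrier G" for w
    proof
      assume "w \<otimes> k \<in> H"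
      with kc H(1) have "(w \<otimes> k) \<otimes> inv k \<in> H"
        by (simp add: subgroup.m_closed)
      with that kc show "w \<in> H"
        by (simp add: m_assoc)
    qed (use H(1) k in \<open>simp add: subgroup.m_closed\<close>)
    with False that show ?thesis
      using cay_adj_subgroup_closed[OF cayley H, of "?s u" "?s v"]
        cay_adj_subgroup_closed[OF cayley H, of u v] by auto
  qed
  with bij show ?thesis
    unfolding cay_aut_def by auto
qed

theorem GRR_generate_eq_carrier:
  assumes cayley: "cayley_subset G R" and GRR: "is_GRR G R" and big: "2 < card (carrier G)"
  shows "generate G R = carrier G"
proof (cases "R = {}")
  case True
  have "2 \<le> card (carrier G - {\<one>})"
    using big by (simp add: card_Diff_singleton_if)
  then obtain a b where "a \<in> carrier G - {\<one>}" "b \<in> carrier G - {\<one>}" "a \<noteq> b"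
    by (rule obtain_distinct_of_card_ge_2)
  moreover have "same_nbrs_outside G R {a, b} a b"
    using True by (simp add: same_nbrs_outside_def cay_adj_def)
  ultimately show ?thesis
    using GRR_twins_eq[OF cayley GRR, of a b \<one>] by auto
next
  case False
  then obtain k where k: "k \<in> R"
    by blast
  let ?H = "generate G R"
  have H: "subgroup ?H G" "R \<subseteq> ?H"
    using cayley_subset_carrier[OF cayley] by (auto intro: generate_is_subgroup generate.incl)
  show ?thesis
  proof (rule ccontr)
    assume "?H \<noteq> carrier G"
    then obtain g where g: "g \<in> carrier G" "g \<notin> ?H"
      using H(1) subgroup.subset by blast
    note s = cay_aut_mult_right_on_subgroup[OF cayley H, of k]
    have "(\<lambda>v\<in>carrier G. if v \<in> ?H then v \<otimes> k else v) \<one> = \<one>"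
      by (rule GRR_aut_fixpoint[OF GRR s g(1)]) (use k H g in auto)
    with k H cayley_subset_one[OF cayley] show False
      by (auto simp: subgroup.one_closed cayley_subset_carrier[OF cayley])
  qed
qed

lemma card_cay_nbrs:
  assumes cayley: "cayley_subset G S" and v: "v \<in> carrier G"
  shows "card {w \<in> carrier G. cay_adj G S v w} = card S"
proof -
  have "{w \<in> carrier G. cay_adj G S v w} = (\<lambda>r. r \<otimes> v) ` S"
  proof (intro equalityI subsetI)
    fix w assume "w \<in> {w \<in> carrier G. cay_adj G S v w}"
    then have "w \<otimes> inv v \<in> S" "w = (w \<otimes> inv v) \<otimes> v"
      using v by (auto simp: cay_adj_iff[OF cayley] m_assoc)
    then show "w \<in> (\<lambda>r. r \<otimes> v) ` S"
      by blast
  qed (use v cayley_subset_carrier[OF cayley] in \<open>auto simp: cay_adj_iff[OF cayley] m_assoc\<close>)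
  moreover have "inj_on (\<lambda>r. r \<otimes> v) S"
    using v cayley_subset_carrier[OF cayley] by (auto intro: inj_onI)
  ultimately show ?thesis
    by (simp add: card_image)
qed

end

locale cay_isolated_pair = group G for G :: "('a, 'b) monoid_scheme" (structure) +
  fixes R :: "'a set" and x y :: 'a
  assumes cayley: "cayley_subset G R"
    and finite_carrier: "finite (carrier G)"
    and x_isolated: "x \<in> cay_isolated G R R"
    and y_isolated: "y \<in> cay_isolated G (cay_compl G R) (cay_compl G R)"
begin

lemma x_mem: "x \<in> R"
  using x_isolated by (simp add: mem_cay_isolated)

lemma x_carrier: "x \<in> carrier G" and x_ne_one: "x \<noteq> \<one>"
  using x_mem cayley_subset_carrier[OF cayley] cayley_subset_one[OF cayley] by auto

lemma y_carrier: "y \<in> carrier G" and y_ne_one: "y \<noteq> \<one>" and y_not_mem: "y \<notin> R"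
  using y_isolated by (auto simp: mem_cay_isolated mem_cay_compl)

lemma not_adj_x: "w \<in> R \<Longrightarrow> \<not> cay_adj G R x w"
  using x_isolated by (simp add: mem_cay_isolated)

lemma adj_y:
  assumes "w \<in> carrier G" "w \<noteq> \<one>" "w \<notin> R" "w \<noteq> y"
  shows "cay_adj G R y w"
  using y_isolated assms cay_adj_compl[OF cayley y_carrier, of w]
  by (auto simp: mem_cay_isolated mem_cay_compl)

lemma almost_twins:
  obtains q where "q \<in> carrier G" "q \<noteq> \<one>" "q \<noteq> x" "q \<noteq> y"
    "cay_adj G R q y" "\<not> cay_adj G R q x" "same_nbrs_outside G R {\<one>, q, x, y} x y"
proof -
  define A where "A = {w \<in> carrier G. cay_adj G R x w} - {y}"
  define B where "B = {w \<in> carrier G. cay_adj G R y w} - {x}"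
  have "card A = card B"
    unfolding A_def B_def
    using card_cay_nbrs[OF cayley x_carrier] card_cay_nbrs[OF cayley y_carrier]
      x_carrier y_carrier cay_adj_sym[of G R x y] finite_carrier
    by (simp add: card_Diff_singleton_if)
  have one_A: "\<one> \<in> A" and one_B: "\<one> \<notin> B"
    using x_mem y_not_mem y_ne_one cay_adj_one[OF cayley] cay_adj_sym
    unfolding A_def B_def by auto
  have A_B: "A - {\<one>} \<subseteq> B"
    using adj_y not_adj_x cay_adj_irrefl[OF cayley] unfolding A_def B_def by blast
  have fin: "finite A" "finite B"
    using finite_carrier unfolding A_def B_def by auto
  moreover have "0 < card A"
    using fin one_A card_gt_0_iff by blast
  ultimately have "card (B - (A - {\<one>})) = 1"
    using \<open>card A = card B\<close> one_A A_B
    by (simp add: card_Diff_subset card_Diff_singleton finite_subset)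
  then obtain q where q: "B - (A - {\<one>}) = {q}"
    by (meson card_1_singletonE)
  then have "q \<in> B" "q \<notin> A"
    using one_B by auto
  then have "q \<in> carrier G" "q \<noteq> \<one>" "q \<noteq> x" "q \<noteq> y" "cay_adj G R q y" "\<not> cay_adj G R q x"
    using one_B cay_adj_irrefl[OF cayley] cay_adj_sym[of G R y] cay_adj_sym[of G R x q]
    unfolding A_def B_def by auto
  moreover have "same_nbrs_outside G R {\<one>, q, x, y} x y"
    unfolding same_nbrs_outside_def
  proof
    fix z assume z: "z \<in> carrier G - {\<one>, q, x, y}"
    have "cay_adj G R z x \<longleftrightarrow> z \<in> A - {\<one>}"
      using z cay_adj_sym[of G R z] unfolding A_def by auto
    also have "\<dots> \<longleftrightarrow> z \<in> B"
      using A_B q z by auto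
    also have "\<dots> \<longleftrightarrow> cay_adj G R z y"
      using z cay_adj_sym[of G R z] unfolding B_def by auto
    finally show "cay_adj G R z x \<longleftrightarrow> cay_adj G R z y" .
  qed
  ultimately show thesis
    using that by blast
qed

end

locale cay_almost_twins = cay_isolated_pair +
  fixes q :: 'a
  assumes not_adj_x_y: "\<not> cay_adj G R x y"
    and q_carrier: "q \<in> carrier G" and q_ne_one: "q \<noteq> \<one>" and q_ne_x: "q \<noteq> x" and q_ne_y: "q \<noteq> y"
    and adj_q_y: "cay_adj G R q y" and not_adj_q_x: "\<not> cay_adj G R q x"
    and same_x_y: "same_nbrs_outside G R {\<one>, q, x, y} x y"
begin

lemma adj_x_iff:
  assumes v: "v \<in> carrier G"
  shows "cay_adj G R x v \<longleftrightarrow> v = \<one> \<or> v \<in> cay_compl G R - {y, q}"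
proof
  assume "cay_adj G R x v"
  with not_adj_x not_adj_x_y not_adj_q_x cay_adj_sym[of G R x] v
  show "v = \<one> \<or> v \<in> cay_compl G R - {y, q}"
    by (auto simp: mem_cay_compl)
next
  assume v': "v = \<one> \<or> v \<in> cay_compl G R - {y, q}"
  show "cay_adj G R x v"
  proof (cases "v = \<one>")
    case False
    with v' x_mem have "v \<in> carrier G - {\<one>, q, x, y}" "cay_adj G R v y"
      using adj_y cay_adj_sym[of G R v] by (auto simp: mem_cay_compl)
    with same_x_y show ?thesis
      by (auto simp: same_nbrs_outside_def cay_adj_sym[of G R x])
  qed (use x_mem cay_adj_one[OF cayley] in simp)
qed

lemma closed_adj_y_iff:
  assumes v: "v \<in> carrier G"
  shows "v = y \<or> cay_adj G R y v \<longleftrightarrow> v \<in> cay_compl G R \<or> (v = q \<and> q \<in> R)"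
proof
  assume "v = y \<or> cay_adj G R y v"
  then show "v \<in> cay_compl G R \<or> (v = q \<and> q \<in> R)"
  proof
    assume adj: "cay_adj G R y v"
    have "v \<noteq> \<one>"
      using adj y_not_mem cay_adj_one[OF cayley] by auto
    moreover have "v = q" if "v \<in> R"
    proof (rule ccontr)
      assume "v \<noteq> q"
      with that adj x_mem \<open>v \<noteq> \<one>\<close> cay_adj_irrefl[OF cayley] not_adj_x_y
      have "v \<in> carrier G - {\<one>, q, x, y}"
        using v cay_adj_sym[of G R x] by auto
      with same_x_y adj have "cay_adj G R x v"
        by (auto simp: same_nbrs_outside_def cay_adj_sym[of G R _ v])
      with not_adj_x that show False
        by blast
    qed
    ultimately show ?thesis
      using v by (auto simp: mem_cay_compl)
  qed (simp add: mem_cay_compl y_carrier y_ne_one y_not_mem)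
next
  assume "v \<in> cay_compl G R \<or> (v = q \<and> q \<in> R)"
  then show "v = y \<or> cay_adj G R y v"
    using adj_y adj_q_y cay_adj_sym[of G R q] by (auto simp: mem_cay_compl)
qed

lemma closed_adj_yx_iff:
  assumes v: "v \<in> carrier G"
  shows "v = y \<otimes> x \<or> cay_adj G R (y \<otimes> x) v
    \<longleftrightarrow> (v \<noteq> x \<and> \<not> cay_adj G R x v) \<or> (v = q \<otimes> x \<and> q \<in> R)"
proof -
  define w where "w = v \<otimes> inv x"
  have w: "w \<in> carrier G" "v = w \<otimes> x"
    using v x_carrier by (simp_all add: w_def m_assoc)
  have "v = y \<otimes> x \<longleftrightarrow> w = y" "v = q \<otimes> x \<longleftrightarrow> w = q" "v = x \<longleftrightarrow> w = \<one>"
    using w x_carrier y_carrier q_carrier right_cancel[of x w \<one>] by auto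
  moreover have "cay_adj G R (y \<otimes> x) v \<longleftrightarrow> cay_adj G R y w"
    using w(2) cay_adj_mult_right[OF cayley y_carrier w(1) x_carrier] by simp
  moreover have "cay_adj G R x v \<longleftrightarrow> w \<in> R"
    using v x_carrier by (simp add: cay_adj_iff[OF cayley] w_def)
  ultimately show ?thesis
    using closed_adj_y_iff[OF w(1)] w(1) by (auto simp: mem_cay_compl)
qed

lemma yx_eq_q: "y \<otimes> x = q"
proof (rule ccontr)
  assume ne: "y \<otimes> x \<noteq> q"
  let ?c = "y \<otimes> x"
  have c: "?c \<in> carrier G"
    using x_carrier y_carrier by simp
  have "?c \<noteq> \<one>"
    using x_carrier y_carrier x_mem y_not_mem cayley_subset_inv[OF cayley x_mem]
    by (auto simp: inv_equality)
  have "?c \<noteq> y"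
    using x_carrier y_carrier x_ne_one by simp
  have "?c \<noteq> q \<otimes> x"
    using x_carrier y_carrier q_carrier q_ne_y by simp
  with closed_adj_yx_iff[OF c] have "?c \<noteq> x" "\<not> cay_adj G R x ?c"
    by auto
  with adj_x_iff[OF c] \<open>?c \<noteq> \<one>\<close> \<open>?c \<noteq> y\<close> ne c have c_mem: "?c \<in> R"
    by (auto simp: mem_cay_compl)
  then have "q \<otimes> x = \<one>"
    using closed_adj_yx_iff[OF one_closed] cay_adj_one[OF cayley] x_mem cay_adj_sym[of G R x]
    by auto
  have "cay_adj G R ?c q"
    using closed_adj_yx_iff[OF q_carrier] ne q_ne_x not_adj_q_x cay_adj_sym[of G R x] by auto
  then have "cay_adj G R (?c \<otimes> x) \<one>"
    using cay_adj_mult_right[OF cayley c q_carrier x_carrier] \<open>q \<otimes> x = \<one>\<close> by simp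
  then have "?c \<otimes> x \<in> R"
    by (simp add: cay_adj_one[OF cayley])
  moreover have "cay_adj G R x (?c \<otimes> x)"
    using c x_carrier c_mem by (simp add: cay_adj_iff[OF cayley] m_assoc)
  ultimately show False
    using not_adj_x by blast
qed

lemma same_one_q: "same_nbrs_outside G R {\<one>, q, x, y} \<one> q"
  unfolding same_nbrs_outside_def
proof
  fix z assume z: "z \<in> carrier G - {\<one>, q, x, y}"
  have "\<not> (z = q \<otimes> x \<and> q \<in> R)"
  proof
    assume "z = q \<otimes> x \<and> q \<in> R"
    moreover from this have "cay_adj G R (y \<otimes> x) \<one>"
      using yx_eq_q cay_adj_one[OF cayley] by simp
    ultimately show False
      using z closed_adj_yx_iff[OF one_closed] x_mem cay_adj_one[OF cayley] cay_adj_sym[of G R x]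
      by auto
  qed
  then have "cay_adj G R z q \<longleftrightarrow> z \<noteq> x \<and> \<not> cay_adj G R x z"
    using z closed_adj_yx_iff[of z] yx_eq_q cay_adj_sym[of G R z] by auto
  also have "\<dots> \<longleftrightarrow> z \<in> R"
    using z adj_x_iff[of z] by (auto simp: mem_cay_compl)
  finally show "cay_adj G R z \<one> \<longleftrightarrow> cay_adj G R z q"
    by (simp add: cay_adj_one[OF cayley])
qed

end

context cay_isolated_pair
begin

lemma double_twins_of_not_adj:
  assumes "\<not> cay_adj G R x y"
  obtains q where "q \<in> carrier G" "q \<noteq> \<one>" "q \<noteq> x" "q \<noteq> y"
    "cay_adj G R q y" "\<not> cay_adj G R q x"
    "same_nbrs_outside G R {\<one>, q, x, y} x y" "same_nbrs_outside G R {\<one>, q, x, y} \<one> q"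
proof -
  obtain q where q: "q \<in> carrier G" "q \<noteq> \<one>" "q \<noteq> x" "q \<noteq> y"
    "cay_adj G R q y" "\<not> cay_adj G R q x" "same_nbrs_outside G R {\<one>, q, x, y} x y"
    by (rule almost_twins)
  interpret cay_almost_twins G R x y q
    by (intro cay_almost_twins.intro cay_isolated_pair_axioms cay_almost_twins_axioms.intro)
      (use assms q in auto)
  from q same_one_q show thesis
    by (rule that)
qed

lemma double_twins:
  obtains q where "q \<in> carrier G" "q \<noteq> \<one>" "q \<noteq> x" "q \<noteq> y"
    "cay_adj G R q y" "\<not> cay_adj G R q x"
    "same_nbrs_outside G R {\<one>, q, x, y} x y" "same_nbrs_outside G R {\<one>, q, x, y} \<one> q"
proof (cases "cay_adj G R x y")
  case True
  interpret C: cay_isolated_pair G "cay_compl G R" y x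
    using cayley finite_carrier x_isolated y_isolated
    by (intro cay_isolated_pair.intro cay_isolated_pair_axioms.intro is_group)
      (simp_all add: cayley_subset_compl cay_compl_cay_compl)
  have "\<not> cay_adj G (cay_compl G R) y x"
    using True x_mem y_not_mem cay_adj_compl[OF cayley y_carrier x_carrier] cay_adj_sym[of G R x]
    by auto
  then obtain q where q: "q \<in> carrier G" "q \<noteq> \<one>" "q \<noteq> y" "q \<noteq> x"
    "cay_adj G (cay_compl G R) q x" "\<not> cay_adj G (cay_compl G R) q y"
    "same_nbrs_outside G (cay_compl G R) {\<one>, q, y, x} y x"
    "same_nbrs_outside G (cay_compl G R) {\<one>, q, y, x} \<one> q"
    by (rule C.double_twins_of_not_adj)
  have V: "{\<one>, q, y, x} = {\<one>, q, x, y}"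
    by blast
  show thesis
  proof (rule that)
    show "cay_adj G R q y" "\<not> cay_adj G R q x"
      using q x_carrier y_carrier cay_adj_compl[OF cayley] by auto
    have "same_nbrs_outside G (cay_compl G R) {\<one>, q, x, y} x y"
      using q(7) by (simp only: V same_nbrs_outside_commute[of G _ _ y x])
    then show "same_nbrs_outside G R {\<one>, q, x, y} x y"
      using x_carrier y_carrier by (simp add: same_nbrs_outside_compl[OF cayley])
    show "same_nbrs_outside G R {\<one>, q, x, y} \<one> q"
      using q(1,8) by (simp add: V same_nbrs_outside_compl[OF cayley])
  qed (use q in auto)
qed (rule double_twins_of_not_adj)

theorem not_GRR: "\<not> is_GRR G R"
proof
  assume GRR: "is_GRR G R"
  obtain q where q: "q \<in> carrier G" "q \<noteq> \<one>" "q \<noteq> x" "q \<noteq> y"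
    and adj_q_y: "cay_adj G R q y" and not_adj_q_x: "\<not> cay_adj G R q x"
    and same: "same_nbrs_outside G R {\<one>, q, x, y} x y" "same_nbrs_outside G R {\<one>, q, x, y} \<one> q"
    by (rule double_twins)
  have x_ne_y: "x \<noteq> y"
    using x_mem y_not_mem by auto
  let ?\<tau> = "\<lambda>v\<in>carrier G. swap_pairs x y \<one> q v"
  have V: "{x, y, \<one>, q} = {\<one>, q, x, y}"
    by blast
  have "cay_adj G R x \<one>" "cay_adj G R y q" "\<not> cay_adj G R x q" "\<not> cay_adj G R y \<one>"
    using x_mem y_not_mem adj_q_y not_adj_q_x cay_adj_one[OF cayley] cay_adj_sym[of G R q]
    by auto
  with same have "?\<tau> \<in> cay_aut G R"
    using x_ne_y x_ne_one y_ne_one q(2-4)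
    by (intro cay_aut_swap_pairs[OF cayley x_carrier y_carrier one_closed q(1)]) (simp_all add: V)
  from GRR_aut_mult_right[OF GRR this]
  have \<tau>: "v \<in> carrier G \<Longrightarrow> swap_pairs x y \<one> q v = v \<otimes> q" for v
    using x_ne_one y_ne_one by (simp add: swap_pairs_def)
  \<comment> \<open>The double transposition is a right translation, so G has only the four elements 1, q, x, y.\<close>
  have four: "v \<in> {\<one>, q, x, y}" if "v \<in> carrier G" for v
  proof (rule ccontr)
    assume "v \<notin> {\<one>, q, x, y}"
    then have "v \<otimes> q = v \<otimes> \<one>"
      using \<tau>[OF that] that by (simp add: swap_pairs_def)
    with that q show False
      by simp
  qed
  have y: "y = x \<otimes> q"
    using \<tau>[OF x_carrier] by (simp add: swap_pairs_def)
  have "y \<otimes> inv x = q"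
  proof -
    have "y \<otimes> inv x \<noteq> \<one>" "y \<otimes> inv x \<noteq> y"
      using x_ne_y x_ne_one x_carrier y_carrier by (simp_all add: inv_solve_right')
    moreover have "y \<otimes> inv x \<noteq> x"
      using y x_carrier q q(3) by (simp add: inv_solve_right')
    ultimately show ?thesis
      using four[of "y \<otimes> inv x"] x_carrier y_carrier by auto
  qed
  then have adj_x_y: "cay_adj G R x y \<longleftrightarrow> q \<in> R"
    using x_carrier y_carrier by (simp add: cay_adj_iff[OF cayley])
  show False
  proof (cases "q \<in> R")
    case True
    have "same_nbrs_outside G R {x, q} x q"
      unfolding same_nbrs_outside_def
    proof
      fix z assume "z \<in> carrier G - {x, q}"
      with four consider "z = \<one>" | "z = y"
        by blast
      then show "cay_adj G R z x \<longleftrightarrow> cay_adj G R z q"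
        by cases (use True x_mem adj_q_y adj_x_y cay_adj_one[OF cayley] cay_adj_sym[of G R _ x]
            cay_adj_sym[of G R _ q] in auto)
    qed
    with GRR_twins_eq[OF cayley GRR x_carrier q(1) one_closed] q x_ne_one show False
      by auto
  next
    case False
    have "same_nbrs_outside G R {q, y} q y"
      unfolding same_nbrs_outside_def
    proof
      fix z assume "z \<in> carrier G - {q, y}"
      with four consider "z = \<one>" | "z = x"
        by blast
      then show "cay_adj G R z q \<longleftrightarrow> cay_adj G R z y"
        by cases (use False y_not_mem not_adj_q_x adj_x_y cay_adj_one[OF cayley]
            cay_adj_sym[of G R _ q] cay_adj_sym[of G R _ y] in auto)
    qed
    with GRR_twins_eq[OF cayley GRR q(1) y_carrier one_closed] q y_ne_one show False
      by auto
  qed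
qed

end

lemma (in group) GRR_isolated_empty:
  assumes cayley: "cayley_subset G R" and finite: "finite (carrier G)" and GRR: "is_GRR G R"
  shows "cay_isolated G R R = {} \<or> cay_isolated G (cay_compl G R) (cay_compl G R) = {}"
proof (rule ccontr)
  assume "\<not> ?thesis"
  then obtain x y where "x \<in> cay_isolated G R R" "y \<in> cay_isolated G (cay_compl G R) (cay_compl G R)"
    by blast
  with cayley finite interpret cay_isolated_pair G R x y
    by unfold_locales
  from not_GRR GRR show False ..
qed

theorem lemma2p2:
  fixes G :: "('a, 'b) monoid_scheme" and R :: "'a set"
  assumes "group G" and "finite (carrier G)"
    and "cayley_subset G R" and "is_GRR G R"
  shows "(card (cay_isolated G R R) \<le> 1 \<or>
         card (cay_isolated G (cay_compl G R) (cay_compl G R)) \<le> 1) \<and>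
        (card (carrier G) > 2 \<longrightarrow>
         (generate G (R - cay_isolated G R R) = carrier G \<and> card (cay_isolated G R R) \<le> 1) \<or>
         (generate G (cay_compl G R - cay_isolated G (cay_compl G R) (cay_compl G R)) = carrier G
            \<and> card (cay_isolated G (cay_compl G R) (cay_compl G R)) \<le> 1))"
proof -
  interpret group G by fact
  have "card (carrier G) > 2 \<Longrightarrow> generate G R = carrier G"
    "card (carrier G) > 2 \<Longrightarrow> generate G (cay_compl G R) = carrier G"
    using assms by (simp_all add: GRR_generate_eq_carrier cayley_subset_compl is_GRR_compl)
  with GRR_isolated_empty[OF assms(3,2,4)] show ?thesis
    by auto
qed

end
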